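(* Let $n\geq 2$ and let $X$ be a finite subset of $\mathbb{R}^n$. Then there exists a polynomial map $F:\mathbb{R}^n\rightarrow\mathbb{R}^n$ such that $F(X)\subseteq \mathbb{R}\times\{0\}^{n-1}$ and $F$ has an inverse which is also a polynomial map $\mathbb{R}^n\rightarrow\mathbb{R}^n$. *)

theory Defs
  imports Main "HOL.Real"
begin

text \<open>Points of R^n are represented as functions nat => real vanishing at all indices >= n.\<close>

definition Rn :: "nat \<Rightarrow> (nat \<Rightarrow> real) set" where
  "Rn n = {x. \<forall>i\<ge>n. x i = 0}"

inductive_set poly_fun :: "nat \<Rightarrow> ((nat \<Rightarrow> real) \<Rightarrow> real) set" for n :: nat where
  const: "(\<lambda>x. c) \<in> poly_fun n"
| var: "i < n \<Longrightarrow> (\<lambda>x. x i) \<in> poly_fun n"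
| add: "p \<in> poly_fun n \<Longrightarrow> q \<in> poly_fun n \<Longrightarrow> (\<lambda>x. p x + q x) \<in> poly_fun n"
| mult: "p \<in> poly_fun n \<Longrightarrow> q \<in> poly_fun n \<Longrightarrow> (\<lambda>x. p x * q x) \<in> poly_fun n"

definition poly_map :: "nat \<Rightarrow> ((nat \<Rightarrow> real) \<Rightarrow> (nat \<Rightarrow> real)) \<Rightarrow> bool" where
  "poly_map n F \<longleftrightarrow> (\<forall>i<n. (\<lambda>x. F x i) \<in> poly_fun n) \<and> (\<forall>x. \<forall>i\<ge>n. F x i = 0)"

end

theory Submission
  imports Defs "HOL-Computational_Algebra.Polynomial"
begin

text \<open>Choose \<open>t\<close> so that the linear form \<open>L x = \<Sum>i<n. t^i * x i\<close> is injective on \<open>X\<close>;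
  this excludes only the finitely many roots of the nonzero polynomials
  \<open>\<Sum>i<n. (x i - y i) * T^i\<close> for distinct \<open>x, y \<in> X\<close>. The shear that adds
  \<open>\<Sum>i\<in>{1..<n}. t^i * x i\<close> to the first coordinate moves \<open>L x\<close> there. By Lagrange
  interpolation each remaining coordinate \<open>x i\<close> of a point of \<open>X\<close> is a polynomial
  \<open>q i\<close> in \<open>L x\<close>, so the shear subtracting \<open>q i (y 0)\<close> from \<open>y i\<close> for \<open>i \<ge> 1\<close>
  kills them. Shears along coordinates they do not depend on are inverted by
  negating the added polynomials.\<close>

lemma poly_fun_uminus:
  assumes "p \<in> poly_fun n"
  shows "(\<lambda>x. - p x) \<in> poly_fun n"
  using poly_fun.mult[OF poly_fun.const[of "-1"] assms] by simp

lemma poly_fun_sum: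
  assumes "\<And>i. i \<in> I \<Longrightarrow> f i \<in> poly_fun n"
  shows "(\<lambda>x. \<Sum>i\<in>I. f i x) \<in> poly_fun n"
  using assms
proof (induction I rule: infinite_finite_induct)
  case (insert a A)
  then show ?case using poly_fun.add[of "f a" n "\<lambda>x. \<Sum>i\<in>A. f i x"] by simp
qed (simp_all add: poly_fun.const)

lemma poly_fun_compose:
  assumes "p \<in> poly_fun n" and "\<And>i. i < n \<Longrightarrow> (\<lambda>x. F x i) \<in> poly_fun n"
  shows "(\<lambda>x. p (F x)) \<in> poly_fun n"
  using assms by (induction rule: poly_fun.induct) (auto intro: poly_fun.intros)

lemma poly_fun_poly_coordinate:
  assumes "k < n"
  shows "(\<lambda>x. poly p (x k)) \<in> poly_fun n"
proof (induction p)
  case (pCons a p)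
  have "(\<lambda>x. a + x k * poly p (x k)) \<in> poly_fun n"
    by (intro poly_fun.intros assms pCons.IH)
  then show ?case by simp
qed (simp add: poly_fun.const)

lemma poly_map_in_Rn: "poly_map n F \<Longrightarrow> F x \<in> Rn n"
  by (simp add: poly_map_def Rn_def)

definition poly_automorphism :: "nat \<Rightarrow> ((nat \<Rightarrow> real) \<Rightarrow> nat \<Rightarrow> real) \<Rightarrow> ((nat \<Rightarrow> real) \<Rightarrow> nat \<Rightarrow> real) \<Rightarrow> bool" where
  "poly_automorphism n F G \<longleftrightarrow> poly_map n F \<and> poly_map n G
     \<and> (\<forall>x\<in>Rn n. G (F x) = x) \<and> (\<forall>y\<in>Rn n. F (G y) = y)"

lemma poly_automorphism_comp:
  assumes "poly_automorphism n F G" and "poly_automorphism n F' G'"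
  shows "poly_automorphism n (F' \<circ> F) (G \<circ> G')"
proof -
  have comp: "poly_map n (G \<circ> F)" if "poly_map n F" "poly_map n G" for F G
    using that poly_fun_compose[of "\<lambda>x. G x _" n F] unfolding poly_map_def by simp
  note FG = assms[unfolded poly_automorphism_def]
  show ?thesis
    unfolding poly_automorphism_def
  proof (intro conjI ballI)
    show "poly_map n (F' \<circ> F)" "poly_map n (G \<circ> G')"
      using FG comp by blast+
  next
    fix x assume "x \<in> Rn n"
    then show "(G \<circ> G') ((F' \<circ> F) x) = x"
      using FG poly_map_in_Rn[of n F x] by simp
  next
    fix y assume "y \<in> Rn n"
    then show "(F' \<circ> F) ((G \<circ> G') y) = y"
      using FG poly_map_in_Rn[of n G' y] by simp
  qed
qed

definition shear :: "nat \<Rightarrow> nat set \<Rightarrow> (nat \<Rightarrow> (nat \<Rightarrow> real) \<Rightarrow> real) \<Rightarrow> (nat \<Rightarrow> real) \<Rightarrow> nat \<Rightarrow> real" where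
  "shear n J a x = (\<lambda>i. if i < n then x i + (if i \<in> J then a i x else 0) else 0)"

lemma poly_map_shear:
  assumes "\<And>i. i \<in> J \<Longrightarrow> i < n \<Longrightarrow> a i \<in> poly_fun n"
  shows "poly_map n (shear n J a)"
  unfolding poly_map_def
proof (intro conjI allI impI)
  fix i assume "i < n"
  then show "(\<lambda>x. shear n J a x i) \<in> poly_fun n"
    by (cases "i \<in> J") (auto simp: shear_def intro: poly_fun.intros assms)
qed (simp add: shear_def)

lemma shear_shear_uminus:
  assumes "x \<in> Rn n"
    and indep: "\<And>i x y. i \<in> J \<Longrightarrow> (\<forall>j. j \<notin> J \<longrightarrow> x j = y j) \<Longrightarrow> a i x = a i y"
  shows "shear n J (\<lambda>i x. - a i x) (shear n J a x) = x"
proof -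
  have "\<forall>j. j \<notin> J \<longrightarrow> shear n J a x j = x j"
    using assms(1) by (auto simp: shear_def Rn_def)
  then have "a i (shear n J a x) = a i x" if "i \<in> J" for i
    using indep that by blast
  then show ?thesis
    using assms(1) by (auto simp: shear_def Rn_def fun_eq_iff)
qed

lemma poly_automorphism_shear:
  assumes "\<And>i. i \<in> J \<Longrightarrow> i < n \<Longrightarrow> a i \<in> poly_fun n"
    and "\<And>i x y. i \<in> J \<Longrightarrow> (\<forall>j. j \<notin> J \<longrightarrow> x j = y j) \<Longrightarrow> a i x = a i y"
  shows "poly_automorphism n (shear n J a) (shear n J (\<lambda>i x. - a i x))"
proof -
  have "shear n J a (shear n J (\<lambda>i x. - a i x) y) = y" if "y \<in> Rn n" for y
    using shear_shear_uminus[OF that, of J "\<lambda>i x. - a i x"] assms(2) by simp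
  then show ?thesis
    unfolding poly_automorphism_def
    using assms by (simp add: poly_map_shear poly_fun_uminus shear_shear_uminus)
qed

lemma finite_roots_of_nonzero_coeffs:
  fixes c :: "nat \<Rightarrow> real"
  assumes "i < n" and "c i \<noteq> 0"
  shows "finite {t. (\<Sum>k<n. c k * t ^ k) = 0}"
proof -
  define p where "p = (\<Sum>k<n. monom (c k) k)"
  have "coeff p i = c i"
    using assms(1) by (simp add: p_def coeff_sum coeff_monom)
  then have "p \<noteq> 0" using assms(2) by auto
  moreover have "poly p t = (\<Sum>k<n. c k * t ^ k)" for t
    by (simp add: p_def poly_sum poly_monom)
  ultimately show ?thesis using poly_roots_finite[of p] by simp
qed

lemma exists_moment_form_inj_on:
  assumes "finite X" and "X \<subseteq> Rn n"
  shows "\<exists>t::real. inj_on (\<lambda>x. \<Sum>k<n. t ^ k * x k) X"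
proof -
  define roots where "roots x y = {t. (\<Sum>k<n. (x k - y k) * t ^ k) = 0}" for x y :: "nat \<Rightarrow> real"
  have fin: "finite (roots x y)" if "x \<in> X" "y \<in> X" "x \<noteq> y" for x y
  proof -
    obtain i where i: "x i \<noteq> y i" using \<open>x \<noteq> y\<close> by auto
    have "i < n"
    proof (rule ccontr)
      assume "\<not> i < n"
      then have "x i = 0" "y i = 0" using that(1,2) assms(2) by (auto simp: Rn_def)
      with i show False by simp
    qed
    with i show ?thesis
      unfolding roots_def by (intro finite_roots_of_nonzero_coeffs) simp_all
  qed
  define D where "D = {(x, y)\<in>X \<times> X. x \<noteq> y}"
  have "finite D"
    using assms(1) finite_subset[of D "X \<times> X"] by (auto simp: D_def)
  then have "finite (\<Union>(x, y)\<in>D. roots x y)"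
    by (rule finite_UN_I) (auto simp: D_def intro: fin)
  then obtain t where t: "t \<notin> (\<Union>(x, y)\<in>D. roots x y)"
    using ex_new_if_finite[OF infinite_UNIV_char_0] by blast
  have "x = y" if "x \<in> X" "y \<in> X" "(\<Sum>k<n. t ^ k * x k) = (\<Sum>k<n. t ^ k * y k)" for x y
  proof (rule ccontr)
    assume "x \<noteq> y"
    then have "t \<notin> roots x y" using t that(1,2) by (auto simp: D_def)
    moreover have "(\<Sum>k<n. (x k - y k) * t ^ k) = (\<Sum>k<n. t ^ k * x k) - (\<Sum>k<n. t ^ k * y k)"
      by (simp add: sum_subtractf[symmetric] algebra_simps)
    ultimately show False
      using that(3) by (simp add: roots_def)
  qed
  then have "inj_on (\<lambda>x. \<Sum>k<n. t ^ k * x k) X" by (rule inj_onI)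
  then show ?thesis ..
qed

lemma lagrange_interpolation:
  fixes f :: "real \<Rightarrow> real"
  assumes "finite A"
  shows "\<exists>p. \<forall>a\<in>A. poly p a = f a"
  using assms
proof (induction A rule: finite_induct)
  case (insert b A)
  then obtain p where p: "\<forall>a\<in>A. poly p a = f a" by blast
  define h where "h = (\<Prod>a\<in>A. [:- a, 1:])"
  have "poly h b \<noteq> 0" and "\<forall>a\<in>A. poly h a = 0"
    using insert.hyps by (auto simp: h_def poly_prod)
  then have "\<forall>a\<in>insert b A. poly (p + smult ((f b - poly p b) / poly h b) h) a = f a"
    using p by auto
  then show ?case by blast
qed simp

theorem lemma2:
  fixes n :: nat and X :: "(nat \<Rightarrow> real) set"
  assumes "n \<ge> 2" and "finite X" and "X \<subseteq> Rn n"
  shows "\<exists>F G. poly_map n F \<and> poly_map n G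
           \<and> (\<forall>x\<in>Rn n. G (F x) = x) \<and> (\<forall>y\<in>Rn n. F (G y) = y)
           \<and> (\<forall>x\<in>X. \<forall>i. 1 \<le> i \<and> i < n \<longrightarrow> F x i = 0)"
proof -
  obtain t :: real where "inj_on (\<lambda>x. \<Sum>k<n. t ^ k * x k) X"
    using exists_moment_form_inj_on[OF assms(2,3)] by blast
  define L where "L = (\<lambda>x. \<Sum>k<n. t ^ k * x k)"
  have inj: "inj_on L X" unfolding L_def by fact
  have "\<forall>i. \<exists>p. \<forall>a\<in>L ` X. poly p a = inv_into X L a i"
    using assms(2) by (intro allI lagrange_interpolation finite_imageI)
  then obtain q where "\<forall>i. \<forall>a\<in>L ` X. poly (q i) a = inv_into X L a i"
    by metis
  with inj have q: "poly (q i) (L x) = x i" if "x \<in> X" for i x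
    using that by (simp add: inv_into_f_f)
  have n0: "0 < n" using assms(1) by simp
  define F1 where "F1 = shear n {0} (\<lambda>_ x. \<Sum>k\<in>{1..<n}. t ^ k * x k)"
  define F2 where "F2 = shear n {1..<n} (\<lambda>i x. - poly (q i) (x 0))"
  have "\<exists>G1. poly_automorphism n F1 G1"
    unfolding F1_def
    by (rule exI, rule poly_automorphism_shear)
      (auto intro!: poly_fun_sum poly_fun.mult poly_fun.const poly_fun.var)
  moreover have "\<exists>G2. poly_automorphism n F2 G2"
    unfolding F2_def
    by (rule exI, rule poly_automorphism_shear)
      (simp_all add: poly_fun_uminus poly_fun_poly_coordinate[OF n0])
  ultimately obtain G where G: "poly_automorphism n (F2 \<circ> F1) G"
    using poly_automorphism_comp by blast
  have "(F2 \<circ> F1) x i = 0" if "x \<in> X" "1 \<le> i" "i < n" for x i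
  proof -
    have "F1 x 0 = L x"
      using n0 by (simp add: F1_def shear_def L_def lessThan_atLeast0 sum.atLeast_Suc_lessThan)
    moreover have "F1 x i = x i"
      using that by (simp add: F1_def shear_def)
    ultimately show ?thesis
      using q[OF that(1)] that by (simp add: F2_def shear_def)
  qed
  with G show ?thesis
    unfolding poly_automorphism_def by blast
qed

end
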